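(* Let $T$ be a complete discrete valuation ring with fraction field $K$ and uniformizer $t$. Let $\widehat R_0$ be a ring containing $T$ which is a complete discrete valuation ring with uniformizer $t$, with fraction field $F_0$; fix a real $\alpha>1$ and equip $F_0$ with the absolute value $|t^n u| = \alpha^{-n}$ ($n \in \mathbb Z$, $u \in \widehat R_0^\times$). Let $F_1, F_2$ be subfields of $F_0$ containing $T$, and let $V \subset F_1 \cap \widehat R_0$ and $W \subset F_2 \cap \widehat R_0$ be $t$-adically complete $T$-submodules such that (I) $V + W = \widehat R_0$ and (II) $V \cap t\widehat R_0 = tV$ and $W \cap t\widehat R_0 = tW$. Equip $V[1/t] \subset F_0$ with the induced metric. Then: (1) $V$ is closed in $\widehat R_0$; (2) for $v \in V[1/t]\setminus\{0\}$, $|v| = \inf\{\alpha^n : n \in \mathbb Z,\ t^n v \in V\}$; (3) $V = \{ v \in V[1/t] : |v| \le 1\}$, and $V$ is an open and closed submodule of $V[1/t]$; (4) $V[1/t]$ is closed in $F_0$ and is a Banach $K$-space.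
   Context: $t$-adically complete means that the natural map $V \to \varprojlim_m V/t^{m+1}V$ is an isomorphism. *)

theory Defs
  imports "HOL-Analysis.Analysis"
begin

text \<open>All rings/fields live inside one ambient field of type 'a (which will be F0).\<close>

definition subring_of :: "'a::field set \<Rightarrow> bool" where
  "subring_of S \<longleftrightarrow> 0 \<in> S \<and> 1 \<in> S \<and> (\<forall>x\<in>S. \<forall>y\<in>S. x + y \<in> S \<and> x - y \<in> S \<and> x * y \<in> S)"

definition subfield_of :: "'a::field set \<Rightarrow> bool" where
  "subfield_of S \<longleftrightarrow> subring_of S \<and> (\<forall>x\<in>S. inverse x \<in> S)"

definition unit_in :: "'a::field set \<Rightarrow> 'a \<Rightarrow> bool" where
  "unit_in S u \<longleftrightarrow> u \<in> S \<and> u \<noteq> 0 \<and> inverse u \<in> S"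

definition smul_set :: "'a::field \<Rightarrow> 'a set \<Rightarrow> 'a set" where
  "smul_set c V = (\<lambda>v. c * v) ` V"

definition dvr_with_uniformizer :: "'a::field set \<Rightarrow> 'a \<Rightarrow> bool" where
  "dvr_with_uniformizer S t \<longleftrightarrow> subring_of S \<and> t \<in> S \<and> t \<noteq> 0 \<and> \<not> unit_in S t \<and>
     (\<forall>x\<in>S. x \<noteq> 0 \<longrightarrow> (\<exists>n::nat. \<exists>u. unit_in S u \<and> x = t ^ n * u))"

definition submodule_over :: "'a::field set \<Rightarrow> 'a set \<Rightarrow> bool" where
  "submodule_over T V \<longleftrightarrow> 0 \<in> V \<and> (\<forall>x\<in>V. \<forall>y\<in>V. x + y \<in> V) \<and> (\<forall>a\<in>T. \<forall>x\<in>V. a * x \<in> V)"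

text \<open>t-adic completeness: the natural map V \<rightarrow> lim V/t^(m+1)V is bijective.\<close>
definition t_adically_complete :: "'a::field \<Rightarrow> 'a set \<Rightarrow> bool" where
  "t_adically_complete t V \<longleftrightarrow>
     (\<forall>v\<in>V. (\<forall>m::nat. v \<in> smul_set (t ^ (m + 1)) V) \<longrightarrow> v = 0) \<and>
     (\<forall>x::nat \<Rightarrow> 'a. (\<forall>m. x m \<in> V \<and> x (Suc m) - x m \<in> smul_set (t ^ (m + 1)) V) \<longrightarrow>
        (\<exists>v\<in>V. \<forall>m. v - x m \<in> smul_set (t ^ (m + 1)) V))"

definition complete_dvr :: "'a::field set \<Rightarrow> 'a \<Rightarrow> bool" where
  "complete_dvr S t \<longleftrightarrow> dvr_with_uniformizer S t \<and> t_adically_complete t S"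

definition frac_field :: "'a::field set \<Rightarrow> 'a set" where
  "frac_field S = {a / b | a b. a \<in> S \<and> b \<in> S \<and> b \<noteq> 0}"

definition tval :: "'a::field set \<Rightarrow> 'a \<Rightarrow> 'a \<Rightarrow> int" where
  "tval R t x = (THE n::int. \<exists>u. unit_in R u \<and> x = t powi n * u)"

definition tabs :: "real \<Rightarrow> 'a::field set \<Rightarrow> 'a \<Rightarrow> 'a \<Rightarrow> real" where
  "tabs \<alpha> R t x = (if x = 0 then 0 else \<alpha> powi (- tval R t x))"

definition tdist :: "real \<Rightarrow> 'a::field set \<Rightarrow> 'a \<Rightarrow> 'a \<Rightarrow> 'a \<Rightarrow> real" where
  "tdist \<alpha> R t x y = tabs \<alpha> R t (x - y)"

definition invert_t :: "'a::field \<Rightarrow> 'a set \<Rightarrow> 'a set" where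
  "invert_t t V = {v / t ^ n | v n. v \<in> V}"

definition banach_space_over :: "'a::field set \<Rightarrow> ('a \<Rightarrow> real) \<Rightarrow> 'a set \<Rightarrow> bool" where
  "banach_space_over K N X \<longleftrightarrow>
     0 \<in> X \<and> (\<forall>x\<in>X. \<forall>y\<in>X. x + y \<in> X) \<and> (\<forall>k\<in>K. \<forall>x\<in>X. k * x \<in> X) \<and>
     (\<forall>x\<in>X. N x \<ge> 0 \<and> (N x = 0 \<longleftrightarrow> x = 0)) \<and>
     (\<forall>x\<in>X. \<forall>y\<in>X. N (x + y) \<le> N x + N y) \<and>
     (\<forall>k\<in>K. \<forall>x\<in>X. N (k * x) = N k * N x) \<and>
     Metric_space.mcomplete X (\<lambda>x y. N (x - y))"

end

theory Submission
  imports Defs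
begin

(* The absolute value is the t-adic one: |x| < \<alpha> powi -k exactly when x \<in> t^(k+1) R0.
   Hypothesis (II) propagates to V \<inter> t^m R0 = t^m V, so on V the induced metric is the t-adic
   metric of V itself, and t-adic completeness makes V a complete metric space. An element of
   V[1/t] of absolute value at most 1 lies in R0 and hence, again by (II), in V; so V is the unit
   ball of V[1/t], which is open because |.| only takes the values \<alpha> powi n. A Cauchy sequence
   in V[1/t] eventually stays in a translate of V, so V[1/t] is complete as well, and all the
   closedness claims follow because complete subspaces of a metric space are closed. *)

locale dvr_fraction_field =
  fixes R :: "'a::field set" and t :: 'a
  assumes dvr: "dvr_with_uniformizer R t"
    and frac_field_eq_UNIV: "frac_field R = UNIV"
begin

abbreviation \<nu> :: "'a \<Rightarrow> int" where "\<nu> \<equiv> tval R t"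

lemma subring_R: "subring_of R"
  and t_in_R: "t \<in> R" and t_nonzero: "t \<noteq> 0" and t_not_unit: "\<not> unit_in R t"
  and R_factor: "\<And>x. x \<in> R \<Longrightarrow> x \<noteq> 0 \<Longrightarrow> \<exists>n::nat. \<exists>u. unit_in R u \<and> x = t ^ n * u"
  using dvr unfolding dvr_with_uniformizer_def by auto

lemma zero_in_R: "0 \<in> R" and one_in_R: "1 \<in> R"
  and add_in_R: "x \<in> R \<Longrightarrow> y \<in> R \<Longrightarrow> x + y \<in> R"
  and diff_in_R: "x \<in> R \<Longrightarrow> y \<in> R \<Longrightarrow> x - y \<in> R"
  and mult_in_R: "x \<in> R \<Longrightarrow> y \<in> R \<Longrightarrow> x * y \<in> R"
  using subring_R unfolding subring_of_def by auto

lemma power_in_R: "x \<in> R \<Longrightarrow> x ^ n \<in> R"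
  by (induction n) (auto intro: mult_in_R one_in_R)

lemma unit_in_one: "unit_in R 1"
  using one_in_R by (simp add: unit_in_def)

lemma unit_in_mult: "unit_in R u \<Longrightarrow> unit_in R v \<Longrightarrow> unit_in R (u * v)"
  unfolding unit_in_def by (auto intro: mult_in_R simp: inverse_mult_distrib)

lemma unit_in_inverse: "unit_in R u \<Longrightarrow> unit_in R (inverse u)"
  unfolding unit_in_def by auto

lemma unit_in_uminus: "unit_in R u \<Longrightarrow> unit_in R (- u)"
  using diff_in_R[OF zero_in_R] unfolding unit_in_def by (auto simp: inverse_minus_eq)

lemma t_power_not_unit: "k > 0 \<Longrightarrow> \<not> unit_in R (t ^ k)"
proof
  assume "k > 0" and unit: "unit_in R (t ^ k)"
  then have "inverse t = t ^ (k - 1) * inverse (t ^ k)"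
    using t_nonzero by (cases k) (simp_all add: field_simps)
  also have "\<dots> \<in> R"
    using unit power_in_R[OF t_in_R] mult_in_R unfolding unit_in_def by auto
  finally show False
    using t_not_unit t_in_R t_nonzero unfolding unit_in_def by auto
qed

lemma tpowi_unit_factorization:
  assumes "x \<noteq> 0"
  obtains n u where "unit_in R u" "x = t powi n * u"
proof -
  have "x \<in> frac_field R"
    using frac_field_eq_UNIV by simp
  then obtain a b where ab: "a \<in> R" "b \<in> R" "b \<noteq> 0" "x = a / b"
    unfolding frac_field_def by blast
  with assms have "a \<noteq> 0" by auto
  with ab obtain i u where u: "unit_in R u" "a = t ^ i * u"
    using R_factor by blast
  obtain j w where w: "unit_in R w" "b = t ^ j * w"
    using R_factor ab by blast
  have "x = t powi (int i - int j) * (u * inverse w)"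
    using ab u w t_nonzero by (simp add: power_int_diff field_simps unit_in_def)
  then show thesis
    using that unit_in_mult[OF u(1) unit_in_inverse[OF w(1)]] by blast
qed

lemma tpowi_unit_factorization_unique:
  assumes u: "unit_in R u" and w: "unit_in R w" and eq: "t powi m * u = t powi n * w"
  shows "m = n"
proof -
  have "m \<le> n" if u: "unit_in R u" and w: "unit_in R w" and eq: "t powi m * u = t powi n * w"
    for m n u w
  proof (rule ccontr)
    assume "\<not> m \<le> n"
    then have "t powi (m - n) = t ^ nat (m - n)"
      by (simp add: power_int_nonneg_exp)
    moreover have "t powi m = t powi n * t powi (m - n)"
      using t_nonzero by (simp flip: power_int_add)
    then have "t powi (m - n) = w * inverse u"
      using eq t_nonzero u unfolding unit_in_def by (simp add: field_simps)
    ultimately have "unit_in R (t ^ nat (m - n))"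
      using unit_in_mult[OF w unit_in_inverse[OF u]] by simp
    with \<open>\<not> m \<le> n\<close> show False
      using t_power_not_unit[of "nat (m - n)"] by simp
  qed
  from this[OF u w eq] this[OF w u eq[symmetric]] show ?thesis by simp
qed

lemma tval_tpowi_unit: "unit_in R u \<Longrightarrow> \<nu> (t powi n * u) = n"
  unfolding tval_def by (rule the_equality) (auto dest: tpowi_unit_factorization_unique)

lemma tval_factorization:
  assumes "x \<noteq> 0"
  obtains u where "unit_in R u" "x = t powi \<nu> x * u"
proof -
  obtain n u where u: "unit_in R u" "x = t powi n * u"
    using tpowi_unit_factorization[OF assms] by blast
  then have "\<nu> x = n"
    using tval_tpowi_unit by simp
  with u show thesis
    using that by metis
qed

lemma tval_mult: "x \<noteq> 0 \<Longrightarrow> y \<noteq> 0 \<Longrightarrow> \<nu> (x * y) = \<nu> x + \<nu> y"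
proof -
  assume "x \<noteq> 0" "y \<noteq> 0"
  then obtain m n u w where u: "unit_in R u" "x = t powi m * u"
    and w: "unit_in R w" "y = t powi n * w"
    by (meson tpowi_unit_factorization)
  then have "x * y = t powi (m + n) * (u * w)"
    using t_nonzero by (simp add: power_int_add mult_ac)
  then show ?thesis
    using u w tval_tpowi_unit unit_in_mult by metis
qed

lemma tval_tpowi: "\<nu> (t powi n) = n"
  using tval_tpowi_unit[OF unit_in_one, of n] by simp

lemma tval_inverse: "x \<noteq> 0 \<Longrightarrow> \<nu> (inverse x) = - \<nu> x"
  using tval_mult[of x "inverse x"] tval_tpowi[of 0] by simp

lemma tval_uminus: "\<nu> (- x) = \<nu> x"
proof (cases "x = 0")
  case False
  have "\<nu> (- 1) = 0"
    using tval_tpowi_unit[OF unit_in_uminus[OF unit_in_one], of 0] by simp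
  with False show ?thesis
    using tval_mult[of "- 1" x] by simp
qed simp

lemma mem_R_iff_tval_nonneg: "x \<in> R \<longleftrightarrow> x = 0 \<or> 0 \<le> \<nu> x"
proof (cases "x = 0")
  case True
  then show ?thesis using zero_in_R by simp
next
  case False
  show ?thesis
  proof
    assume "x \<in> R"
    with False obtain n u where "unit_in R u" "x = t ^ n * u"
      using R_factor by blast
    then show "x = 0 \<or> 0 \<le> \<nu> x"
      using tval_tpowi_unit[of u "int n"] by simp
  next
    assume "x = 0 \<or> 0 \<le> \<nu> x"
    with False have "t powi \<nu> x = t ^ nat (\<nu> x)"
      by (simp add: power_int_nonneg_exp)
    moreover obtain u where "unit_in R u" "x = t powi \<nu> x * u"
      using tval_factorization[OF False] by blast
    ultimately show "x \<in> R"
      using power_in_R[OF t_in_R] mult_in_R unfolding unit_in_def by metis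
  qed
qed

lemma tval_add:
  assumes "x \<noteq> 0" "y \<noteq> 0" "x + y \<noteq> 0"
  shows "min (\<nu> x) (\<nu> y) \<le> \<nu> (x + y)"
proof -
  have "\<nu> x \<le> \<nu> (x + y)" if "x \<noteq> 0" "x + y \<noteq> 0" "\<nu> x \<le> \<nu> y" for x y
  proof (cases "y = 0")
    case False
    have "\<nu> (y / x) = \<nu> y - \<nu> x"
      using that False tval_mult[of y "inverse x"] tval_inverse by (simp add: divide_inverse)
    with that have "1 + y / x \<in> R"
      using mem_R_iff_tval_nonneg add_in_R one_in_R by auto
    moreover have "x + y = x * (1 + y / x)" and "1 + y / x \<noteq> 0"
      using that by (simp_all add: field_simps)
    ultimately show ?thesis
      using that tval_mult mem_R_iff_tval_nonneg by fastforce
  qed simp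
  from this[of x y] this[of y x] assms show ?thesis
    by (cases "\<nu> x \<le> \<nu> y") (simp_all add: add.commute)
qed

lemma mem_smul_tpow_R_iff: "x \<in> smul_set (t ^ m) R \<longleftrightarrow> x = 0 \<or> int m \<le> \<nu> x"
proof -
  have "x \<in> smul_set (t ^ m) R \<longleftrightarrow> x / t ^ m \<in> R"
    using t_nonzero unfolding smul_set_def image_iff
    by (metis nonzero_eq_divide_eq nonzero_mult_div_cancel_left power_not_zero)
  also have "\<dots> \<longleftrightarrow> x = 0 \<or> int m \<le> \<nu> x"
    using t_nonzero tval_mult[of x "inverse (t ^ m)"] tval_inverse tval_tpowi[of "int m"]
    by (cases "x = 0") (simp_all add: mem_R_iff_tval_nonneg divide_inverse)
  finally show ?thesis .
qed

end

lemma (in Metric_space) MCauchy_fast_subsequence: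
  assumes "MCauchy \<sigma>" and "\<And>k. e k > 0"
  obtains r where "strict_mono r" and "\<And>k. d (\<sigma> (r (Suc k))) (\<sigma> (r k)) < e k"
proof -
  have "\<forall>k. \<exists>M. \<forall>n n'. M \<le> n \<longrightarrow> M \<le> n' \<longrightarrow> d (\<sigma> n) (\<sigma> n') < e k"
    using assms unfolding MCauchy_def by blast
  then obtain N where N: "\<And>k n n'. N k \<le> n \<Longrightarrow> N k \<le> n' \<Longrightarrow> d (\<sigma> n) (\<sigma> n') < e k"
    by metis
  define r where "r k = (\<Sum>i\<le>k. N i) + k" for k
  have "strict_mono r"
    unfolding strict_mono_Suc_iff r_def by simp
  moreover have "d (\<sigma> (r (Suc k))) (\<sigma> (r k)) < e k" for k
  proof -
    have "N k \<le> r k"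
      unfolding r_def by (simp add: member_le_sum trans_le_add1)
    moreover have "r k \<le> r (Suc k)"
      unfolding r_def by simp
    ultimately show ?thesis
      using N[of k "r (Suc k)" "r k"] by linarith
  qed
  ultimately show thesis
    using that by blast
qed

locale t_absolute_value = dvr_fraction_field +
  fixes \<alpha> :: real
  assumes alpha_gt_1: "\<alpha> > 1"
begin

abbreviation absv :: "'a \<Rightarrow> real" where "absv \<equiv> tabs \<alpha> R t"

lemma powi_alpha_pos: "\<alpha> powi n > 0"
  using alpha_gt_1 by simp

lemma powi_alpha_le_iff: "\<alpha> powi m \<le> \<alpha> powi n \<longleftrightarrow> m \<le> n"
  using power_int_increasing[of m n \<alpha>] power_int_strict_increasing[of n m \<alpha>] alpha_gt_1
  by force

lemma powi_alpha_less_iff: "\<alpha> powi m < \<alpha> powi n \<longleftrightarrow> m < n"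
  using powi_alpha_le_iff[of n m] by linarith

lemma powi_alpha_neg_tendsto_0: "(\<lambda>k. \<alpha> powi - int k) \<longlonglongrightarrow> 0"
proof -
  have "(\<lambda>k. inverse \<alpha> ^ k) \<longlonglongrightarrow> 0"
    using alpha_gt_1 by (intro LIMSEQ_power_zero) (simp add: inverse_less_1_iff)
  then show ?thesis
    by (simp add: power_int_minus power_inverse)
qed

lemma absv_nonneg: "absv x \<ge> 0"
  using powi_alpha_pos unfolding tabs_def by (simp add: less_imp_le)

lemma absv_eq_0_iff: "absv x = 0 \<longleftrightarrow> x = 0"
  using alpha_gt_1 unfolding tabs_def by (simp add: power_int_eq_0_iff)

lemma absv_uminus: "absv (- x) = absv x"
  unfolding tabs_def by (simp add: tval_uminus)

lemma absv_mult: "absv (x * y) = absv x * absv y"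
proof -
  have "\<alpha> powi (- m + - n) = \<alpha> powi (- m) * \<alpha> powi (- n)" for m n
    using alpha_gt_1 by (intro power_int_add) simp
  then show ?thesis
    unfolding tabs_def by (simp add: tval_mult)
qed

lemma absv_tpowi_mult: "absv (t powi n * x) = \<alpha> powi (- n) * absv x"
  using t_nonzero unfolding absv_mult by (simp add: tabs_def tval_tpowi)

lemma absv_less_powi_iff: "x \<noteq> 0 \<Longrightarrow> absv x < \<alpha> powi (- m) \<longleftrightarrow> m < \<nu> x"
  unfolding tabs_def by (simp add: powi_alpha_less_iff)

lemma absv_le_1_iff: "absv x \<le> 1 \<longleftrightarrow> x \<in> R"
  using absv_less_powi_iff[of x "- 1"] mem_R_iff_tval_nonneg[of x] powi_alpha_pos[of 1]
  by (cases "x = 0") (auto simp: tabs_def powi_alpha_le_iff[of _ 0, simplified])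

lemma absv_less_alpha_iff: "absv x < \<alpha> \<longleftrightarrow> x \<in> R"
  using absv_less_powi_iff[of x "- 1"] mem_R_iff_tval_nonneg[of x] alpha_gt_1
  by (cases "x = 0") (auto simp: tabs_def)

lemma absv_less_powi_iff_mem_smul: "absv x < \<alpha> powi - int k \<longleftrightarrow> x \<in> smul_set (t ^ Suc k) R"
  using absv_less_powi_iff[of x "int k"] mem_smul_tpow_R_iff[of x "Suc k"] powi_alpha_pos[of "- int k"]
  by (cases "x = 0") (auto simp: tabs_def)

lemma absv_ultrametric: "absv (x + y) \<le> max (absv x) (absv y)"
proof (cases "x = 0 \<or> y = 0 \<or> x + y = 0")
  case True
  then show ?thesis
    using absv_nonneg[of x] absv_nonneg[of y] by (auto simp: tabs_def)
next
  case False
  then have "\<nu> x \<le> \<nu> (x + y) \<or> \<nu> y \<le> \<nu> (x + y)"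
    using tval_add by fastforce
  with False show ?thesis
    unfolding tabs_def by (auto simp: powi_alpha_le_iff le_max_iff_disj)
qed

lemma Metric_space_tdist: "Metric_space S (tdist \<alpha> R t)"
proof
  fix x y z
  show "0 \<le> tdist \<alpha> R t x y"
    unfolding tdist_def by (rule absv_nonneg)
  show "tdist \<alpha> R t x y = tdist \<alpha> R t y x"
    using absv_uminus[of "x - y"] unfolding tdist_def by simp
  show "tdist \<alpha> R t x y = 0 \<longleftrightarrow> x = y"
    unfolding tdist_def by (simp add: absv_eq_0_iff)
  show "tdist \<alpha> R t x z \<le> tdist \<alpha> R t x y + tdist \<alpha> R t y z"
    using absv_ultrametric[of "x - y" "y - z"] absv_nonneg[of "x - y"] absv_nonneg[of "y - z"]
    unfolding tdist_def by simp
qed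

lemma closedin_if_mcomplete:
  assumes "A \<subseteq> S" and "Metric_space.mcomplete A (tdist \<alpha> R t)"
  shows "closedin (Metric_space.mtopology S (tdist \<alpha> R t)) A"
proof -
  interpret Submetric S "tdist \<alpha> R t" A
    using assms(1) Metric_space_tdist by (simp add: Submetric_def Submetric_axioms_def)
  show ?thesis
    using assms(2) by (rule mcomplete_imp_closedin)
qed

lemma limitin_if_tdist_less_powi:
  assumes "range f \<subseteq> S" and "l \<in> S" and "\<And>k. tdist \<alpha> R t (f k) l < \<alpha> powi - int k"
  shows "limitin (Metric_space.mtopology S (tdist \<alpha> R t)) f l sequentially"
proof -
  interpret Metric_space S "tdist \<alpha> R t"
    by (rule Metric_space_tdist)
  have "(\<lambda>k. tdist \<alpha> R t (f k) l) \<longlonglongrightarrow> 0"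
    using less_imp_le[OF assms(3)]
    by (intro tendsto_sandwich[OF _ _ tendsto_const powi_alpha_neg_tendsto_0])
      (simp_all add: always_eventually tdist_def absv_nonneg)
  moreover have "\<forall>\<^sub>F k in sequentially. f k \<in> S"
    using assms(1) by (auto intro: always_eventually)
  ultimately show ?thesis
    using assms(2) unfolding limitin_metric_dist_null by blast
qed

end

locale t_lattice = t_absolute_value +
  fixes T V :: "'a set"
  assumes T_dvr: "dvr_with_uniformizer T t"
    and V_submodule: "submodule_over T V"
    and V_subset_R: "V \<subseteq> R"
    and V_t_adically_complete: "t_adically_complete t V"
    and V_inter_smul_t: "V \<inter> smul_set t R = smul_set t V"
begin

lemma subring_T: "subring_of T" and t_in_T: "t \<in> T"
  using T_dvr unfolding dvr_with_uniformizer_def by auto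

lemma zero_in_V: "0 \<in> V"
  and add_in_V: "x \<in> V \<Longrightarrow> y \<in> V \<Longrightarrow> x + y \<in> V"
  and scalar_in_V: "a \<in> T \<Longrightarrow> x \<in> V \<Longrightarrow> a * x \<in> V"
  using V_submodule unfolding submodule_over_def by auto

lemma diff_in_V: "x \<in> V \<Longrightarrow> y \<in> V \<Longrightarrow> x - y \<in> V"
proof -
  assume "x \<in> V" "y \<in> V"
  moreover have "- 1 \<in> T"
    using subring_T unfolding subring_of_def by (metis diff_0)
  ultimately show "x - y \<in> V"
    using add_in_V scalar_in_V by (metis mult_minus1 diff_conv_add_uminus)
qed

lemma tpow_mult_in_V: "x \<in> V \<Longrightarrow> t ^ n * x \<in> V"
  by (induction n) (simp_all add: mult.assoc scalar_in_V t_in_T)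

lemma V_inter_smul_tpow: "V \<inter> smul_set (t ^ m) R = smul_set (t ^ m) V"
proof
  show "smul_set (t ^ m) V \<subseteq> V \<inter> smul_set (t ^ m) R"
    using tpow_mult_in_V V_subset_R by (auto simp: smul_set_def)
  show "V \<inter> smul_set (t ^ m) R \<subseteq> smul_set (t ^ m) V"
  proof (induction m)
    case 0
    then show ?case
      by (auto simp: smul_set_def)
  next
    case (Suc m)
    show ?case
    proof
      fix x assume x: "x \<in> V \<inter> smul_set (t ^ Suc m) R"
      then obtain r where r: "r \<in> R" "x = t * (t ^ m * r)"
        by (auto simp: smul_set_def)
      with x have "x \<in> V \<inter> smul_set t R"
        using mult_in_R power_in_R t_in_R by (auto simp: smul_set_def)
      then obtain v where v: "v \<in> V" "x = t * v"
        using V_inter_smul_t by (auto simp: smul_set_def)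
      with r t_nonzero have "v = t ^ m * r"
        by simp
      with v r Suc.IH have "v \<in> smul_set (t ^ m) V"
        by (auto simp: smul_set_def)
      with v show "x \<in> smul_set (t ^ Suc m) V"
        by (auto simp: smul_set_def)
    qed
  qed
qed

lemma t_adic_limit:
  assumes f: "\<And>k. f k \<in> V" "\<And>k. tdist \<alpha> R t (f (Suc k)) (f k) < \<alpha> powi - int k"
  obtains v where "v \<in> V" "\<And>k. tdist \<alpha> R t (f k) v < \<alpha> powi - int k"
proof -
  have "f (Suc k) - f k \<in> smul_set (t ^ (k + 1)) V" for k
    using f diff_in_V V_inter_smul_tpow[of "Suc k"] absv_less_powi_iff_mem_smul
    unfolding tdist_def by auto
  then obtain v where v: "v \<in> V" "\<And>k. v - f k \<in> smul_set (t ^ (k + 1)) V"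
    using V_t_adically_complete f(1) unfolding t_adically_complete_def by blast
  have "absv (v - f k) < \<alpha> powi - int k" for k
    using v(2)[of k] V_inter_smul_tpow[of "Suc k"] absv_less_powi_iff_mem_smul by auto
  then have "tdist \<alpha> R t (f k) v < \<alpha> powi - int k" for k
    using absv_uminus[of "v - f k"] unfolding tdist_def by simp
  with v(1) show thesis
    using that by blast
qed

lemma V_mcomplete: "Metric_space.mcomplete V (tdist \<alpha> R t)"
proof -
  interpret V: Metric_space V "tdist \<alpha> R t"
    by (rule Metric_space_tdist)
  show ?thesis
    unfolding V.mcomplete_def
  proof (intro allI impI)
    fix \<sigma> assume \<sigma>: "V.MCauchy \<sigma>"
    obtain r where r: "strict_mono r"
      and fast: "\<And>k. tdist \<alpha> R t (\<sigma> (r (Suc k))) (\<sigma> (r k)) < \<alpha> powi - int k"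
      using V.MCauchy_fast_subsequence[OF \<sigma>, where e = "\<lambda>k. \<alpha> powi - int k"] powi_alpha_pos
      by blast
    have "range (\<sigma> \<circ> r) \<subseteq> V"
      using \<sigma> unfolding V.MCauchy_def by auto
    moreover have "tdist \<alpha> R t ((\<sigma> \<circ> r) (Suc k)) ((\<sigma> \<circ> r) k) < \<alpha> powi - int k" for k
      using fast by simp
    ultimately obtain v where "v \<in> V" "\<And>k. tdist \<alpha> R t ((\<sigma> \<circ> r) k) v < \<alpha> powi - int k"
      using t_adic_limit[of "\<sigma> \<circ> r"] by blast
    with \<open>range (\<sigma> \<circ> r) \<subseteq> V\<close> have "limitin V.mtopology (\<sigma> \<circ> r) v sequentially"
      by (intro limitin_if_tdist_less_powi)
    then show "\<exists>x. limitin V.mtopology \<sigma> x sequentially"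
      using V.MCauchy_convergent_subsequence[OF \<sigma> r] by blast
  qed
qed

lemma mem_invert_t_iff: "x \<in> invert_t t V \<longleftrightarrow> (\<exists>v n. v \<in> V \<and> x = v / t ^ n)"
  unfolding invert_t_def by auto

lemma V_subset_invert_t: "V \<subseteq> invert_t t V"
proof
  fix v assume "v \<in> V"
  moreover have "v = v / t ^ 0"
    by simp
  ultimately show "v \<in> invert_t t V"
    unfolding mem_invert_t_iff by blast
qed

lemma diff_in_invert_t: "x \<in> invert_t t V \<Longrightarrow> y \<in> invert_t t V \<Longrightarrow> x - y \<in> invert_t t V"
proof -
  assume "x \<in> invert_t t V" "y \<in> invert_t t V"
  then obtain v m w n where vw: "v \<in> V" "w \<in> V" "x = v / t ^ m" "y = w / t ^ n"
    unfolding mem_invert_t_iff by blast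
  moreover have "x = t ^ n * v / t ^ (m + n)" and "y = t ^ m * w / t ^ (m + n)"
    using vw t_nonzero by (simp_all add: power_add)
  ultimately have "x - y = (t ^ n * v - t ^ m * w) / t ^ (m + n)"
    by (simp add: diff_divide_distrib)
  moreover have "t ^ n * v - t ^ m * w \<in> V"
    using vw diff_in_V tpow_mult_in_V by simp
  ultimately show ?thesis
    unfolding mem_invert_t_iff by blast
qed

lemma add_in_invert_t: "x \<in> invert_t t V \<Longrightarrow> y \<in> invert_t t V \<Longrightarrow> x + y \<in> invert_t t V"
  using diff_in_invert_t[of x "0 - y"] diff_in_invert_t[of 0 y] V_subset_invert_t zero_in_V
  by (simp add: subset_iff)

lemma tpowi_mult_in_invert_t: "x \<in> invert_t t V \<Longrightarrow> t powi k * x \<in> invert_t t V"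
proof -
  assume "x \<in> invert_t t V"
  then obtain v n where v: "v \<in> V" "x = v / t ^ n"
    unfolding mem_invert_t_iff by blast
  show ?thesis
  proof (cases "k \<ge> 0")
    case True
    then have "t powi k * x = t ^ nat k * v / t ^ n"
      using v by (simp add: power_int_nonneg_exp)
    then show ?thesis
      using tpow_mult_in_V[OF v(1)] unfolding mem_invert_t_iff by blast
  next
    case False
    then have "t powi k = inverse (t ^ nat (- k))"
      using power_int_minus[of t "- k"] by (simp add: power_int_nonneg_exp)
    then have "t powi k * x = v / t ^ (n + nat (- k))"
      using v t_nonzero by (simp add: field_simps power_add)
    then show ?thesis
      using v(1) unfolding mem_invert_t_iff by blast
  qed
qed

lemma scalar_in_invert_t: "c \<in> frac_field T \<Longrightarrow> x \<in> invert_t t V \<Longrightarrow> c * x \<in> invert_t t V"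
proof -
  assume "c \<in> frac_field T" "x \<in> invert_t t V"
  then obtain a b v m where ab: "a \<in> T" "b \<in> T" "b \<noteq> 0" "c = a / b"
    and v: "v \<in> V" "x = v / t ^ m"
    unfolding frac_field_def mem_invert_t_iff by auto
  then obtain n u where u: "unit_in T u" "b = t ^ n * u"
    using T_dvr unfolding dvr_with_uniformizer_def by blast
  then have "a * inverse u \<in> T"
    using ab subring_T unfolding unit_in_def subring_of_def by auto
  then have "a * inverse u * v \<in> V"
    using scalar_in_V v(1) by blast
  moreover have "c * x = a * inverse u * v / t ^ (n + m)"
    unfolding ab(4) v(2) u(2) by (simp add: power_add divide_inverse inverse_mult_distrib mult_ac)
  ultimately show ?thesis
    unfolding mem_invert_t_iff by blast
qed

lemma mem_V_if_absv_le_1: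
  assumes x: "x \<in> invert_t t V" and "absv x \<le> 1"
  shows "x \<in> V"
proof -
  obtain v n where v: "v \<in> V" and x_eq: "x = v / t ^ n"
    using x unfolding mem_invert_t_iff by blast
  have "x \<in> R"
    using assms(2) absv_le_1_iff by blast
  moreover have "v = t ^ n * x"
    using x_eq t_nonzero by simp
  ultimately have "v \<in> smul_set (t ^ n) R"
    unfolding smul_set_def by blast
  with v obtain w where "w \<in> V" and "v = t ^ n * w"
    using V_inter_smul_tpow[of n] unfolding smul_set_def by blast
  with x_eq t_nonzero show ?thesis
    by simp
qed

lemma V_eq_absv_le_1: "V = {x \<in> invert_t t V. absv x \<le> 1}"
  using V_subset_invert_t mem_V_if_absv_le_1 V_subset_R absv_le_1_iff by blast

lemma V_eq_mball: "V = Metric_space.mball (invert_t t V) (tdist \<alpha> R t) 0 \<alpha>"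
proof -
  interpret X: Metric_space "invert_t t V" "tdist \<alpha> R t"
    by (rule Metric_space_tdist)
  show ?thesis
    using V_eq_absv_le_1 absv_less_alpha_iff absv_le_1_iff absv_uminus V_subset_invert_t zero_in_V
    by (auto simp: tdist_def)
qed

lemma invert_t_mcomplete: "Metric_space.mcomplete (invert_t t V) (tdist \<alpha> R t)"
proof -
  interpret X: Metric_space "invert_t t V" "tdist \<alpha> R t"
    by (rule Metric_space_tdist)
  interpret V: Metric_space V "tdist \<alpha> R t"
    by (rule Metric_space_tdist)
  have tdist_shift: "tdist \<alpha> R t (x - c) (y - c) = tdist \<alpha> R t x y" for x y c
    by (simp add: tdist_def)
  show ?thesis
    unfolding X.mcomplete_def
  proof (intro allI impI)
    fix \<sigma> assume \<sigma>: "X.MCauchy \<sigma>"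
    then obtain N where N: "\<And>n n'. N \<le> n \<Longrightarrow> N \<le> n' \<Longrightarrow> tdist \<alpha> R t (\<sigma> n) (\<sigma> n') < 1"
      unfolding X.MCauchy_def by (meson zero_less_one)
    have "\<sigma> n - \<sigma> N \<in> V" if "N \<le> n" for n
      using \<sigma> N[OF that order_refl] mem_V_if_absv_le_1 diff_in_invert_t
      unfolding X.MCauchy_def tdist_def by (simp add: less_imp_le range_subsetD)
    then have "\<forall>\<^sub>F n in sequentially. \<sigma> n - \<sigma> N \<in> V"
      by (auto simp: eventually_sequentially)
    moreover have "\<forall>\<epsilon>>0. \<exists>M. \<forall>n n'. M \<le> n \<longrightarrow> M \<le> n' \<longrightarrow>
        tdist \<alpha> R t (\<sigma> n - \<sigma> N) (\<sigma> n' - \<sigma> N) < \<epsilon>"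
      using \<sigma> unfolding X.MCauchy_def tdist_shift by blast
    ultimately obtain v where "limitin V.mtopology (\<lambda>n. \<sigma> n - \<sigma> N) v sequentially"
      using V_mcomplete[unfolded V.mcomplete, rule_format, of "\<lambda>n. \<sigma> n - \<sigma> N"] by blast
    then have "v \<in> V" and "\<forall>\<epsilon>>0. \<exists>M. \<forall>n\<ge>M. tdist \<alpha> R t (\<sigma> n - \<sigma> N) v < \<epsilon>"
      unfolding V.limit_metric_sequentially by meson+
    moreover have "\<sigma> N + v \<in> invert_t t V"
      using \<open>v \<in> V\<close> \<sigma> V_subset_invert_t add_in_invert_t unfolding X.MCauchy_def by blast
    ultimately have "limitin X.mtopology \<sigma> (\<sigma> N + v) sequentially"
      using \<sigma> unfolding X.limit_metric_sequentially X.MCauchy_def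
      by (simp add: tdist_def diff_diff_eq range_subsetD)
    then show "\<exists>x. limitin X.mtopology \<sigma> x sequentially"
      by blast
  qed
qed

lemma absv_eq_Inf:
  assumes x: "x \<in> invert_t t V" "x \<noteq> 0"
  shows "absv x = Inf ((\<lambda>n. \<alpha> powi n) ` {n::int. t powi n * x \<in> V})"
proof (rule cInf_eq_minimum[symmetric])
  have "absv (t powi (- \<nu> x) * x) = 1"
    using x(2) alpha_gt_1 unfolding absv_tpowi_mult by (simp add: tabs_def power_int_minus)
  then have "t powi (- \<nu> x) * x \<in> V"
    using mem_V_if_absv_le_1 tpowi_mult_in_invert_t[OF x(1)] by simp
  with x(2) show "absv x \<in> (\<lambda>n. \<alpha> powi n) ` {n. t powi n * x \<in> V}"
    unfolding tabs_def by force
next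
  fix y assume "y \<in> (\<lambda>n. \<alpha> powi n) ` {n. t powi n * x \<in> V}"
  then obtain n where n: "y = \<alpha> powi n" "t powi n * x \<in> V"
    by blast
  then have "\<alpha> powi (- n) * absv x \<le> 1"
    using V_subset_R absv_le_1_iff absv_tpowi_mult by (metis subsetD)
  with n(1) show "absv x \<le> y"
    using alpha_gt_1 powi_alpha_pos[of n] by (simp add: power_int_minus field_simps)
qed

lemma banach_space_over_invert_t: "banach_space_over (frac_field T) absv (invert_t t V)"
  unfolding banach_space_over_def
proof (intro conjI ballI)
  show "0 \<in> invert_t t V"
    using V_subset_invert_t zero_in_V by blast
  show "Metric_space.mcomplete (invert_t t V) (\<lambda>x y. absv (x - y))"
    using invert_t_mcomplete unfolding tdist_def .
qed (simp_all add: add_in_invert_t scalar_in_invert_t absv_nonneg absv_eq_0_iff absv_mult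
  order_trans[OF absv_ultrametric] absv_nonneg)

end

theorem lemma3p1:
  fixes T R0 F1 F2 V W :: "'a::field set" and t :: 'a and \<alpha> :: real
  assumes T_cdvr: "complete_dvr T t"
    and R0_cdvr: "complete_dvr R0 t"
    and T_sub: "T \<subseteq> R0"
    and F0_frac: "frac_field R0 = UNIV"
    and alpha: "\<alpha> > 1"
    and F1: "subfield_of F1" "T \<subseteq> F1"
    and F2: "subfield_of F2" "T \<subseteq> F2"
    and V_sub: "V \<subseteq> F1 \<inter> R0" and W_sub: "W \<subseteq> F2 \<inter> R0"
    and V_mod: "submodule_over T V" and W_mod: "submodule_over T W"
    and V_compl: "t_adically_complete t V" and W_compl: "t_adically_complete t W"
    and I: "{v + w | v w. v \<in> V \<and> w \<in> W} = R0"
    and IIV: "V \<inter> smul_set t R0 = smul_set t V"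
    and IIW: "W \<inter> smul_set t R0 = smul_set t W"
  shows "closedin (Metric_space.mtopology R0 (tdist \<alpha> R0 t)) V
    \<and> (\<forall>v \<in> invert_t t V - {0}.
         tabs \<alpha> R0 t v = Inf ((\<lambda>n. \<alpha> powi n) ` {n::int. t powi n * v \<in> V}))
    \<and> V = {v \<in> invert_t t V. tabs \<alpha> R0 t v \<le> 1}
    \<and> openin (Metric_space.mtopology (invert_t t V) (tdist \<alpha> R0 t)) V
    \<and> closedin (Metric_space.mtopology (invert_t t V) (tdist \<alpha> R0 t)) V
    \<and> closedin (Metric_space.mtopology UNIV (tdist \<alpha> R0 t)) (invert_t t V)
    \<and> banach_space_over (frac_field T) (tabs \<alpha> R0 t) (invert_t t V)"
proof -
  interpret t_lattice R0 t \<alpha> T V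
    using R0_cdvr T_cdvr F0_frac alpha V_mod V_sub V_compl IIV
    unfolding complete_dvr_def by unfold_locales auto
  interpret X: Metric_space "invert_t t V" "tdist \<alpha> R0 t"
    by (rule Metric_space_tdist)
  show ?thesis
    using closedin_if_mcomplete[OF V_subset_R V_mcomplete]
      closedin_if_mcomplete[OF V_subset_invert_t V_mcomplete]
      closedin_if_mcomplete[OF subset_UNIV invert_t_mcomplete]
      X.openin_mball[of 0 \<alpha>, folded V_eq_mball]
      absv_eq_Inf V_eq_absv_le_1 banach_space_over_invert_t
    by blast
qed

end
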